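(* Let $G:\mathbb{R}^n\to\mathbb{R}$ be a convex function with a proper minimum at the origin and $G(0)=0$, and let $\omega$ and $\delta_0$ be as in the context. Then for all $\delta\le\delta_0$ and for either choice of sign, $$\int_{\{G<\delta\}}e^{-G(x)/\varepsilon}e^{\pm\omega(G(x))/\varepsilon}dx\simeq\int_{\mathbb{R}^n}e^{-G(x)/\varepsilon}dx.$$
   Context: A minimum of $G$ at $0$ is proper if there is $\hat\delta>0$ such that for every $0<\delta<\hat\delta$ there exists $\rho>0$ with $G\ge G(0)+\delta$ on $\partial B_\rho(0)$. $\omega:[0,\infty)\to[0,\infty)$ is continuous and increasing with $\omega(s)/s\to0$ as $s\to0$, and $\delta_0$ is the largest number such that $\omega(\delta)\le\delta/8$ for all $\delta\le4\delta_0$. $f(\varepsilon)\simeq g(\varepsilon)$ means there exist a constant $C$ and an increasing continuous function $\hat\eta:[0,\infty)\to[0,\infty)$ with $\hat\eta(s)\to0$ as $s\to0$, depending only on $\omega$ (and $n$), such that $(1-\hat\eta(C\varepsilon))f(\varepsilon)\le g(\varepsilon)\le(1+\hat\eta(C\varepsilon))f(\varepsilon)$ for all sufficiently small $\varepsilon>0$. *)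

theory Defs
  imports "HOL-Analysis.Analysis"
begin

definition proper_minimum :: "('a::real_normed_vector \<Rightarrow> real) \<Rightarrow> 'a \<Rightarrow> bool" where
  "proper_minimum G x0 \<longleftrightarrow>
     (\<forall>x. G x0 \<le> G x) \<and>
     (\<exists>\<delta>h>0. \<forall>\<delta>. 0 < \<delta> \<and> \<delta> < \<delta>h \<longrightarrow>
        (\<exists>\<rho>>0. \<forall>x\<in>sphere x0 \<rho>. G x \<ge> G x0 + \<delta>))"

definition admissible_eta :: "(real \<Rightarrow> real) \<Rightarrow> bool" where
  "admissible_eta \<eta> \<longleftrightarrow> continuous_on {0..} \<eta> \<and> mono_on {0..} \<eta> \<and>
     (\<forall>s\<ge>0. 0 \<le> \<eta> s) \<and> (\<eta> \<longlongrightarrow> 0) (at_right 0)"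

end

theory Submission
  imports Defs "HOL-Real_Asymp.Real_Asymp"
begin

text \<open>
  Since \<open>G\<close> is convex with \<open>G 0 = 0\<close>, \<open>G (l x) \<ge> l G x\<close> for \<open>l \<ge> 1\<close>, so the substitution
  \<open>x \<mapsto> l x\<close> bounds \<open>\<integral> exp (- c G)\<close> by \<open>l^n \<integral> exp (- l c G)\<close>. With \<open>l = 2\<close> this makes the
  integrals finite (the proper minimum makes the sublevel sets bounded), and with \<open>l = 4/3\<close> it
  shows that at most the fraction \<open>e^(-K/8) (4/3)^n\<close> of the mass of \<open>exp (- G / \<epsilon>)\<close> lies
  above the level \<open>K \<epsilon>\<close>. Below that level the perturbation \<open>exp (\<plusminus>\<omega>(G) / \<epsilon>)\<close> lies
  between \<open>exp (- \<omega>(K \<epsilon>) / \<epsilon>)\<close> and \<open>exp (\<omega>(K \<epsilon>) / \<epsilon>)\<close>, and between \<open>K \<epsilon>\<close> and \<open>\<delta>\<close> it is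
  absorbed by \<open>exp (G / (8 \<epsilon>))\<close> because \<open>\<omega>(s) \<le> s / 8\<close>. So the two integrals agree up to the
  factor \<open>exp (\<omega>(K \<epsilon>) / \<epsilon>) / (1 - e^(-K/8) (4/3)^n)\<close>, independently of \<open>G\<close>. Letting \<open>K\<close> grow
  slowly as \<open>\<epsilon> \<rightarrow> 0\<close>, so that \<open>K \<epsilon> \<rightarrow> 0\<close> and \<open>\<omega>(K \<epsilon>) / \<epsilon> \<rightarrow> 0\<close>, this factor tends to 1, and
  a continuous monotone majorant of the error is the function \<open>\<eta>\<close>.
\<close>

lemma convex_on_scaleR_le:
  fixes G :: "'a::real_vector \<Rightarrow> real"
  assumes "convex_on UNIV G" "G 0 = 0" "0 \<le> t" "t \<le> 1"
  shows "G (t *\<^sub>R x) \<le> t * G x"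
  using convex_onD[OF assms(1), of t 0 x] assms by simp

lemma convex_on_scaleR_ge:
  fixes G :: "'a::real_vector \<Rightarrow> real"
  assumes "convex_on UNIV G" "G 0 = 0" "1 \<le> l"
  shows "l * G x \<le> G (l *\<^sub>R x)"
proof -
  have "G ((1/l) *\<^sub>R (l *\<^sub>R x)) \<le> (1/l) * G (l *\<^sub>R x)"
    using assms by (intro convex_on_scaleR_le) auto
  then show ?thesis using assms by (simp add: field_simps)
qed

lemma convex_on_UNIV_borel_measurable:
  fixes G :: "'a::euclidean_space \<Rightarrow> real"
  assumes "convex_on UNIV G"
  shows "G \<in> borel_measurable borel"
  by (intro borel_measurable_continuous_onI convex_on_continuous assms) auto

lemma nn_integral_lborel_scaleR:
  fixes F :: "'a::euclidean_space \<Rightarrow> ennreal"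
  assumes [measurable]: "F \<in> borel_measurable borel" and "l > 0"
  shows "(\<integral>\<^sup>+x. F x \<partial>lborel) = ennreal (l ^ DIM('a)) * (\<integral>\<^sup>+x. F (l *\<^sub>R x) \<partial>lborel)"
  using assms(2)
  by (subst lborel_affine[of l 0])
     (simp_all add: nn_integral_density nn_integral_distr nn_integral_cmult)

lemma nn_integral_exp_convex_dilation_le:
  fixes G :: "'a::euclidean_space \<Rightarrow> real"
  assumes convex: "convex_on UNIV G" and zero: "G 0 = 0" and l: "1 \<le> l" and c: "0 \<le> c"
    and S[measurable]: "S \<in> sets borel" and S_shrink: "\<And>y. l *\<^sub>R y \<in> S \<Longrightarrow> y \<in> S"
  shows "(\<integral>\<^sup>+x. ennreal (exp (- c * G x)) * indicator S x \<partial>lborel)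
     \<le> ennreal (l ^ DIM('a)) * (\<integral>\<^sup>+x. ennreal (exp (- (l * c) * G x)) * indicator S x \<partial>lborel)"
proof -
  have [measurable]: "G \<in> borel_measurable borel"
    using convex by (rule convex_on_UNIV_borel_measurable)
  have "(\<integral>\<^sup>+x. ennreal (exp (- c * G x)) * indicator S x \<partial>lborel)
     = ennreal (l ^ DIM('a)) * (\<integral>\<^sup>+x. ennreal (exp (- c * G (l *\<^sub>R x))) * indicator S (l *\<^sub>R x) \<partial>lborel)"
    using l by (intro nn_integral_lborel_scaleR) auto
  also have "\<dots> \<le> ennreal (l ^ DIM('a)) * (\<integral>\<^sup>+x. ennreal (exp (- (l * c) * G x)) * indicator S x \<partial>lborel)"
  proof (intro mult_left_mono nn_integral_mono)
    fix x
    have "exp (- c * G (l *\<^sub>R x)) \<le> exp (- (l * c) * G x)"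
      using mult_left_mono[OF convex_on_scaleR_ge[OF convex zero l, of x] c] by (simp add: mult_ac)
    then show "ennreal (exp (- c * G (l *\<^sub>R x))) * indicator S (l *\<^sub>R x)
        \<le> ennreal (exp (- (l * c) * G x)) * indicator S x"
      using S_shrink[of x] by (auto simp: indicator_def)
  qed auto
  finally show ?thesis .
qed

lemma two_pow_mult_exp_le_half: "(2::real) ^ n * exp (- real (Suc n)) \<le> 1 / 2"
proof -
  define x where "x = real (Suc n)"
  have "(2::real) ^ Suc n \<le> exp 1 ^ Suc n"
    using exp_ge_add_one_self[of 1] by (intro power_mono) auto
  also have "\<dots> = exp x" by (simp add: x_def exp_add flip: exp_of_nat_mult)
  finally show ?thesis unfolding x_def[symmetric] by (simp add: exp_minus field_simps)
qed

lemma ennreal_le_absorb: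
  fixes J M :: ennreal and a q :: real
  assumes le: "J \<le> ennreal a * (M + ennreal q * J)" and fin: "J < \<infinity>" "M < \<infinity>"
    and a: "0 \<le> a" and q: "0 \<le> q" and aq: "a * q \<le> 1 / 2"
  shows "J \<le> ennreal (2 * a) * M"
proof -
  obtain j m where j: "J = ennreal j" "0 \<le> j" and m: "M = ennreal m" "0 \<le> m"
    using fin by (cases J; cases M) auto
  have "ennreal j \<le> ennreal (a * (m + q * j))"
    using le j m a q by (simp add: ennreal_mult'[symmetric] ennreal_plus[symmetric] del: ennreal_plus)
  then have "j \<le> a * m + (a * q) * j"
    using j m a q by (subst (asm) ennreal_le_iff) (auto simp: algebra_simps)
  also have "\<dots> \<le> a * m + j / 2"
    using mult_right_mono[OF aq j(2)] by simp
  finally have "j \<le> 2 * a * m" by simp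
  then show ?thesis
    using j m a by (simp add: ennreal_mult'[symmetric])
qed

lemma two_sided_bound_of_sandwich:
  fixes f g w \<tau> \<eta> :: real
  assumes g: "0 \<le> g" and w: "0 \<le> w" and \<tau>: "0 \<le> \<tau>" "\<tau> < 1"
    and lower: "exp (- w) * ((1 - \<tau>) * g) \<le> f" and upper: "f \<le> (exp w + \<tau>) * g"
    and \<eta>: "exp w / (1 - \<tau>) \<le> 1 + \<eta>"
  shows "(1 - \<eta>) * f \<le> g \<and> g \<le> (1 + \<eta>) * f"
proof
  have "0 \<le> exp (- w) * ((1 - \<tau>) * g)"
    using g \<tau> by simp
  with lower have f: "0 \<le> f" by linarith
  have "g \<le> exp w / (1 - \<tau>) * f"
    using lower \<tau> by (simp add: exp_minus field_simps)
  also have "\<dots> \<le> (1 + \<eta>) * f"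
    using \<eta> f by (rule mult_right_mono)
  finally show "g \<le> (1 + \<eta>) * f" .
  have "1 \<le> exp w" using w by simp
  then have "1 - exp w - \<tau> \<le> 0" using \<tau> by linarith
  then have "\<tau> * (1 - exp w - \<tau>) \<le> 0"
    using \<tau> by (simp add: mult_nonneg_nonpos)
  then have "exp w + \<tau> \<le> exp w / (1 - \<tau>)"
    using \<tau> by (simp add: field_simps)
  then have f_le: "f \<le> (1 + \<eta>) * g"
    using upper \<eta> g by (meson mult_right_mono order_trans)
  show "(1 - \<eta>) * f \<le> g"
  proof (cases "\<eta> \<le> 1")
    case True
    then have "(1 - \<eta>) * f \<le> (1 - \<eta>) * ((1 + \<eta>) * g)"
      using f_le by (intro mult_left_mono) auto
    also have "\<dots> = g - \<eta>\<^sup>2 * g"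
      by (simp add: algebra_simps power2_eq_square)
    also have "\<dots> \<le> g"
      using g by simp
    finally show ?thesis .
  next
    case False
    then have "(1 - \<eta>) * f \<le> 0" using f by (intro mult_nonpos_nonneg) auto
    then show ?thesis using g by linarith
  qed
qed

locale weight_perturbation =
  fixes \<omega> :: "real \<Rightarrow> real" and \<delta> \<epsilon> \<sigma> :: real
  assumes \<omega>_mono: "mono_on {0..} \<omega>" and \<omega>_nonneg: "\<And>s. 0 \<le> s \<Longrightarrow> 0 \<le> \<omega> s"
    and \<omega>_le: "\<And>s. 0 \<le> s \<Longrightarrow> s \<le> \<delta> \<Longrightarrow> \<omega> s \<le> s / 8"
    and \<epsilon>: "0 < \<epsilon>" and \<sigma>: "\<sigma> \<in> {-1, 1}"
begin

lemma perturbed_weight_le_exp: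
  assumes "0 \<le> s" "s \<le> \<delta>"
  shows "exp (- s / \<epsilon>) * exp (\<sigma> * \<omega> s / \<epsilon>) \<le> exp (- (7/8) * s / \<epsilon>)"
proof -
  have "\<sigma> * \<omega> s \<le> s / 8"
    using \<sigma> \<omega>_nonneg[of s] \<omega>_le[of s] assms by auto
  then have "- s / \<epsilon> + \<sigma> * \<omega> s / \<epsilon> \<le> - (7/8) * s / \<epsilon>"
    using \<epsilon> by (simp add: field_simps)
  then show ?thesis by (simp flip: exp_add)
qed

lemma perturbed_weight_upper:
  assumes s: "0 \<le> s" and a: "0 \<le> a"
  shows "(if s < \<delta> then exp (- s / \<epsilon>) * exp (\<sigma> * \<omega> s / \<epsilon>) else 0)
    \<le> exp (\<omega> a / \<epsilon>) * exp (- s / \<epsilon>) + (if a \<le> s then exp (- (7/8) * s / \<epsilon>) else 0)"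
proof (cases "s < \<delta>")
  case True
  show ?thesis
  proof (cases "a \<le> s")
    case True
    then show ?thesis
      using perturbed_weight_le_exp[OF s less_imp_le[OF \<open>s < \<delta>\<close>]] \<open>s < \<delta>\<close> by (simp add: add_increasing)
  next
    case False
    have "\<sigma> * \<omega> s \<le> \<omega> a"
      using \<sigma> \<omega>_nonneg[OF s] \<omega>_nonneg[OF a] mono_onD[OF \<omega>_mono, of s a] s False by auto
    then have "exp (\<sigma> * \<omega> s / \<epsilon>) \<le> exp (\<omega> a / \<epsilon>)"
      using \<epsilon> by (simp add: divide_right_mono)
    then show ?thesis using True False by (simp add: mult.commute)
  qed
qed simp

lemma perturbed_weight_lower:
  assumes s: "0 \<le> s" and a: "a \<le> \<delta>"
  shows "exp (- \<omega> a / \<epsilon>) * (exp (- s / \<epsilon>) - (if a \<le> s then exp (- (7/8) * s / \<epsilon>) else 0))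
    \<le> (if s < \<delta> then exp (- s / \<epsilon>) * exp (\<sigma> * \<omega> s / \<epsilon>) else 0)"
proof (cases "a \<le> s")
  case True
  have "- s / \<epsilon> \<le> - (7/8) * s / \<epsilon>"
    using s \<epsilon> by (simp add: field_simps)
  then have "exp (- s / \<epsilon>) \<le> exp (- (7/8) * s / \<epsilon>)" by simp
  then have "exp (- \<omega> a / \<epsilon>) * (exp (- s / \<epsilon>) - exp (- (7/8) * s / \<epsilon>)) \<le> 0"
    by (intro mult_nonneg_nonpos) auto
  moreover have "0 \<le> (if s < \<delta> then exp (- s / \<epsilon>) * exp (\<sigma> * \<omega> s / \<epsilon>) else 0)"
    by simp
  ultimately show ?thesis by (simp only: if_P[OF True])
next
  case False
  have "- \<omega> a \<le> \<sigma> * \<omega> s"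
    using \<sigma> \<omega>_nonneg[OF s] mono_onD[OF \<omega>_mono, of s a] s False by auto
  from divide_right_mono[OF this less_imp_le[OF \<epsilon>]]
  have "exp (- \<omega> a / \<epsilon>) \<le> exp (\<sigma> * \<omega> s / \<epsilon>)" by simp
  then show ?thesis using False a by (simp add: mult.commute)
qed

end

text \<open>\<open>tail_factor n K\<close> bounds the fraction of the mass of \<open>exp (- G / \<epsilon>)\<close> that lies above the
  level \<open>K * \<epsilon>\<close>; \<open>level_error\<close> is the resulting relative error when the integrals are split
  at that level.\<close>
definition tail_factor :: "nat \<Rightarrow> real \<Rightarrow> real" where
  "tail_factor n K = exp (- K / 8) * (4/3) ^ n"

definition level_error :: "(real \<Rightarrow> real) \<Rightarrow> nat \<Rightarrow> real \<Rightarrow> real \<Rightarrow> real" where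
  "level_error \<omega> n \<epsilon> K = exp (\<omega> (K * \<epsilon>) / \<epsilon>) / (1 - tail_factor n K) - 1"

lemma tail_factor_nonneg: "0 \<le> tail_factor n K"
  by (simp add: tail_factor_def)

lemma tendsto_tail_factor: "(tail_factor n \<longlongrightarrow> 0) at_top"
  unfolding tail_factor_def by real_asymp

lemma eventually_tail_factor_less_one: "\<exists>K0::nat. \<forall>K\<ge>K0. tail_factor n (real K) < 1"
proof -
  have "\<forall>\<^sub>F K in sequentially. tail_factor n (real K) < 1"
    using filterlim_compose[OF tendsto_tail_factor filterlim_real_sequentially]
    by (rule order_tendstoD(2)) simp
  then show ?thesis by (simp add: eventually_sequentially)
qed

locale convex_proper_minimum =
  fixes G :: "'a::euclidean_space \<Rightarrow> real"
  assumes convex: "convex_on UNIV G" and zero: "G 0 = 0" and proper: "proper_minimum G 0"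
begin

lemma nonneg: "0 \<le> G x"
  using proper zero unfolding proper_minimum_def by metis

lemma borel_measurable [measurable]: "G \<in> borel_measurable borel"
  using convex by (rule convex_on_UNIV_borel_measurable)

text \<open>Convexity turns the lower bound on one sphere into linear growth outside it.\<close>
lemma bounded_sublevel: "bounded {x. G x < t}"
proof -
  obtain dh where "dh > 0" and dh: "\<forall>\<delta>. 0 < \<delta> \<and> \<delta> < dh \<longrightarrow> (\<exists>\<rho>>0. \<forall>x\<in>sphere 0 \<rho>. G x \<ge> G 0 + \<delta>)"
    using proper unfolding proper_minimum_def by blast
  define d where "d = dh / 2"
  have d: "0 < d" "d < dh" using \<open>dh > 0\<close> by (auto simp: d_def)
  obtain \<rho> where \<rho>: "\<rho> > 0" and sphere: "\<forall>x\<in>sphere 0 \<rho>. d \<le> G x"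
    using dh d zero by force
  have "{x. G x < t} \<subseteq> cball 0 (max \<rho> (t * \<rho> / d))"
  proof
    fix x assume "x \<in> {x. G x < t}"
    then have xt: "G x < t" by simp
    show "x \<in> cball 0 (max \<rho> (t * \<rho> / d))"
    proof (rule ccontr)
      assume "x \<notin> cball 0 (max \<rho> (t * \<rho> / d))"
      then have nx: "\<rho> < norm x" "t * \<rho> / d < norm x" by auto
      have "0 < norm x" using nx \<rho> by linarith
      define s where "s = \<rho> / norm x"
      have s: "0 \<le> s" "s \<le> 1" using nx \<rho> by (auto simp: s_def divide_le_eq_1)
      have "s *\<^sub>R x \<in> sphere 0 \<rho>" using nx \<rho> by (auto simp: s_def)
      then have "d \<le> G (s *\<^sub>R x)" using sphere by blast
      also have "\<dots> \<le> s * G x" using convex_on_scaleR_le[OF convex zero s] .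
      finally have "d * norm x \<le> \<rho> * G x" using \<open>0 < norm x\<close> by (simp add: s_def field_simps)
      moreover have "t * \<rho> < d * norm x" using nx(2) d by (simp add: field_simps)
      moreover have "\<rho> * G x < \<rho> * t" using xt \<rho> by simp
      ultimately show False by (simp add: mult.commute)
    qed
  qed
  then show ?thesis using bounded_cball bounded_subset by blast
qed

lemma exp_double_le_sublevel:
  assumes c: "0 < c"
  shows "ennreal (exp (- (2 * c) * G x)) * indicator S x
    \<le> indicator {x. G x < B / c} x + ennreal (exp (- B)) * (ennreal (exp (- c * G x)) * indicator S x)"
proof (cases "G x < B / c")
  case True
  have "exp (- (2 * c) * G x) \<le> 1" using c nonneg[of x] by simp
  then show ?thesis using True by (auto simp: indicator_def intro: add_increasing2)
next
  case False
  then have "B \<le> c * G x" using c by (simp add: field_simps)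
  have "exp (- (2 * c) * G x) = exp (- (c * G x)) * exp (- c * G x)" by (simp flip: exp_add)
  also have "\<dots> \<le> exp (- B) * exp (- c * G x)" using \<open>B \<le> c * G x\<close> by (intro mult_right_mono) auto
  finally show ?thesis using False
    by (auto simp: indicator_def ennreal_mult'[symmetric] intro!: ennreal_leI)
qed

text \<open>Dilating by 2 doubles the decay rate at the cost of a factor \<open>2^n\<close>; above the level \<open>n + 1\<close>
  the extra decay beats that factor, and the finite integral over the ball is absorbed into the
  left-hand side.\<close>
lemma nn_integral_exp_ball_le:
  assumes c: "0 < c"
  shows "(\<integral>\<^sup>+x. ennreal (exp (- c * G x)) * indicator (ball 0 R) x \<partial>lborel)
    \<le> ennreal (2 * 2 ^ DIM('a)) * emeasure lborel {x. G x < real (Suc DIM('a)) / c}"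
proof -
  define B where "B = real (Suc DIM('a))"
  define M where "M = emeasure lborel {x. G x < B / c}"
  define J where "J = (\<integral>\<^sup>+x. ennreal (exp (- c * G x)) * indicator (ball 0 R) x \<partial>lborel)"
  have [measurable]: "ball (0::'a) R \<in> sets borel" by simp
  have "J \<le> (\<integral>\<^sup>+x. indicator (ball (0::'a) R) x \<partial>lborel)"
    unfolding J_def using c nonneg by (intro nn_integral_mono) (auto simp: indicator_def)
  also have "\<dots> < \<infinity>" using emeasure_bounded_finite[of "ball (0::'a) R"] by simp
  finally have "J < \<infinity>" .
  have "J \<le> ennreal (2 ^ DIM('a)) * (\<integral>\<^sup>+x. ennreal (exp (- (2 * c) * G x)) * indicator (ball 0 R) x \<partial>lborel)"
    unfolding J_def using c
  proof (intro nn_integral_exp_convex_dilation_le[OF convex zero])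
    show "y \<in> ball 0 R" if "2 *\<^sub>R y \<in> ball 0 R" for y :: 'a
      using that by simp (smt (verit) norm_ge_zero)
  qed auto
  also have "(\<integral>\<^sup>+x. ennreal (exp (- (2 * c) * G x)) * indicator (ball 0 R) x \<partial>lborel)
      \<le> (\<integral>\<^sup>+x. indicator {x. G x < B / c} x + ennreal (exp (- B)) * (ennreal (exp (- c * G x)) * indicator (ball 0 R) x) \<partial>lborel)"
    using c by (intro nn_integral_mono exp_double_le_sublevel)
  also have "\<dots> = M + ennreal (exp (- B)) * J"
    unfolding M_def J_def by (subst nn_integral_add) (simp_all add: nn_integral_cmult)
  finally have "J \<le> ennreal (2 ^ DIM('a)) * (M + ennreal (exp (- B)) * J)"
    by (simp add: mult_left_mono)
  moreover have "M < \<infinity>"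
    unfolding M_def by (intro emeasure_bounded_finite bounded_sublevel)
  ultimately have "J \<le> ennreal (2 * 2 ^ DIM('a)) * M"
    using \<open>J < \<infinity>\<close> two_pow_mult_exp_le_half[of "DIM('a)"]
    by (intro ennreal_le_absorb) (auto simp: B_def)
  then show ?thesis by (simp only: J_def M_def B_def)
qed

lemma nn_integral_exp_finite:
  assumes "0 < c"
  shows "(\<integral>\<^sup>+x. ennreal (exp (- c * G x)) \<partial>lborel) < \<infinity>"
proof -
  let ?D = "density lborel (\<lambda>x. ennreal (exp (- c * G x)))"
  have "x \<in> (\<Union>i. ball 0 (real i))" for x :: 'a
  proof -
    obtain i :: nat where "norm x < real i" using reals_Archimedean2 by blast
    then show ?thesis by auto
  qed
  then have "(\<Union>i. ball 0 (real i)) = (UNIV :: 'a set)" by blast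
  then have "(\<integral>\<^sup>+x. ennreal (exp (- c * G x)) \<partial>lborel) = emeasure ?D (\<Union>i. ball 0 (real i))"
    by (simp add: emeasure_density)
  also have "\<dots> = (SUP i. emeasure ?D (ball 0 (real i)))"
    by (rule SUP_emeasure_incseq[symmetric]) (auto simp: incseq_def)
  also have "\<dots> \<le> ennreal (2 * 2 ^ DIM('a)) * emeasure lborel {x. G x < real (Suc DIM('a)) / c}"
    using nn_integral_exp_ball_le[OF assms] by (intro SUP_least) (simp add: emeasure_density)
  also have "\<dots> < \<infinity>"
    using emeasure_bounded_finite[OF bounded_sublevel] by (simp add: ennreal_mult_less_top)
  finally show ?thesis .
qed

lemma integrable_exp:
  assumes "0 < c"
  shows "integrable lborel (\<lambda>x. exp (- c * G x))"
  using nn_integral_exp_finite[OF assms] by (intro integrableI_nonneg) auto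

lemma integral_exp_le_dilated:
  assumes c: "0 < c" and l: "1 \<le> l"
  shows "(\<integral>x. exp (- c * G x) \<partial>lborel) \<le> l ^ DIM('a) * (\<integral>x. exp (- (l * c) * G x) \<partial>lborel)"
proof -
  have "ennreal (\<integral>x. exp (- c * G x) \<partial>lborel) = (\<integral>\<^sup>+x. ennreal (exp (- c * G x)) * indicator UNIV x \<partial>lborel)"
    using integrable_exp[OF c] by (simp add: nn_integral_eq_integral)
  also have "\<dots> \<le> ennreal (l ^ DIM('a)) * (\<integral>\<^sup>+x. ennreal (exp (- (l * c) * G x)) * indicator UNIV x \<partial>lborel)"
    using c l by (intro nn_integral_exp_convex_dilation_le[OF convex zero]) auto
  also have "\<dots> = ennreal (l ^ DIM('a) * (\<integral>x. exp (- (l * c) * G x) \<partial>lborel))"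
    using integrable_exp[of "l * c"] c l by (simp add: nn_integral_eq_integral ennreal_mult')
  finally show ?thesis
    using l by (subst (asm) ennreal_le_iff) (auto intro!: mult_nonneg_nonneg integral_nonneg_AE)
qed

lemma borel_measurable_continuous_on_comp:
  assumes "continuous_on {0..} \<omega>"
  shows "(\<lambda>x. \<omega> (G x)) \<in> borel_measurable borel"
proof -
  have "continuous_on UNIV (\<lambda>s. \<omega> (max 0 s))"
    by (rule continuous_on_compose2[OF assms continuous_on_max[OF continuous_on_const continuous_on_id]]) auto
  then have "(\<lambda>x. \<omega> (max 0 (G x))) \<in> borel_measurable borel"
    by (rule borel_measurable_continuous_on[OF _ borel_measurable])
  moreover have "max 0 (G x) = G x" for x using nonneg[of x] by simp
  ultimately show ?thesis by simp
qed

lemma integrable_bounded_by_exp: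
  assumes [measurable]: "h \<in> borel_measurable borel" and c: "0 < c"
    and bound: "\<And>x. \<bar>h x\<bar> \<le> C * exp (- c * G x)"
  shows "integrable lborel h"
proof (rule Bochner_Integration.integrable_bound)
  show "integrable lborel (\<lambda>x. C * exp (- c * G x))"
    by (rule integrable_mult_right[OF integrable_exp[OF c]])
  show "AE x in lborel. norm (h x) \<le> norm (C * exp (- c * G x))"
    using bound by (intro AE_I2) (metis abs_ge_self order_trans real_norm_def)
qed measurable

lemma integrable_exp_divide:
  assumes "0 < \<epsilon>"
  shows "integrable lborel (\<lambda>x. exp (- G x / \<epsilon>))"
  using assms by (intro integrable_bounded_by_exp[of _ "1 / \<epsilon>" 1]) auto

lemma integrable_tail:
  assumes "0 < \<epsilon>"
  shows "integrable lborel (\<lambda>x. if K * \<epsilon> \<le> G x then exp (- (7/8) * G x / \<epsilon>) else 0)"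
  using assms by (intro integrable_bounded_by_exp[of _ "7 / (8 * \<epsilon>)" 1]) auto

lemma integral_tail_le:
  assumes \<epsilon>: "0 < \<epsilon>"
  shows "(\<integral>x. (if K * \<epsilon> \<le> G x then exp (- (7/8) * G x / \<epsilon>) else 0) \<partial>lborel)
    \<le> tail_factor DIM('a) K * (\<integral>x. exp (- G x / \<epsilon>) \<partial>lborel)"
proof -
  define c where "c = 3 / (4 * \<epsilon>)"
  have c: "0 < c" using \<epsilon> by (simp add: c_def)
  have "(\<integral>x. (if K * \<epsilon> \<le> G x then exp (- (7/8) * G x / \<epsilon>) else 0) \<partial>lborel)
      \<le> (\<integral>x. exp (- K / 8) * exp (- c * G x) \<partial>lborel)"
  proof (rule integral_mono)
    show "integrable lborel (\<lambda>x. if K * \<epsilon> \<le> G x then exp (- (7/8) * G x / \<epsilon>) else 0)"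
      using \<epsilon> by (rule integrable_tail)
    show "integrable lborel (\<lambda>x. exp (- K / 8) * exp (- c * G x))"
      by (rule integrable_mult_right[OF integrable_exp[OF c]])
    fix x
    have "- (7/8) * G x / \<epsilon> = - (G x / \<epsilon>) / 8 - c * G x"
      using \<epsilon> by (simp add: c_def field_simps)
    moreover have "K \<le> G x / \<epsilon>" if "K * \<epsilon> \<le> G x"
      using that \<epsilon> by (simp add: field_simps)
    ultimately show "(if K * \<epsilon> \<le> G x then exp (- (7/8) * G x / \<epsilon>) else 0) \<le> exp (- K / 8) * exp (- c * G x)"
      by (simp flip: exp_add)
  qed
  also have "\<dots> = exp (- K / 8) * (\<integral>x. exp (- c * G x) \<partial>lborel)"
    by (rule integral_mult_right_zero)
  also have "\<dots> \<le> exp (- K / 8) * ((4/3) ^ DIM('a) * (\<integral>x. exp (- (4/3 * c) * G x) \<partial>lborel))"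
    by (intro mult_left_mono integral_exp_le_dilated[OF c]) auto
  also have "\<dots> = exp (- K / 8) * ((4/3) ^ DIM('a) * (\<integral>x. exp (- G x / \<epsilon>) \<partial>lborel))"
    using \<epsilon> by (simp only: c_def) (simp add: field_simps)
  finally show ?thesis by (simp only: tail_factor_def mult.assoc)
qed

lemma perturbed_integral_bounds:
  fixes \<omega> :: "real \<Rightarrow> real" and \<delta> \<epsilon> K \<sigma> :: real
  assumes \<omega>_cont: "continuous_on {0..} \<omega>" and \<omega>_mono: "mono_on {0..} \<omega>"
    and \<omega>_nonneg: "\<And>s. 0 \<le> s \<Longrightarrow> 0 \<le> \<omega> s" and \<omega>_le: "\<And>s. 0 \<le> s \<Longrightarrow> s \<le> \<delta> \<Longrightarrow> \<omega> s \<le> s / 8"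
    and \<epsilon>: "0 < \<epsilon>" and K: "0 \<le> K" "K * \<epsilon> \<le> \<delta>" and \<sigma>: "\<sigma> \<in> {-1, 1}"
  defines "f \<equiv> LINT x:{x. G x < \<delta>}|lborel. exp (- G x / \<epsilon>) * exp (\<sigma> * \<omega> (G x) / \<epsilon>)"
    and "g \<equiv> LINT x|lborel. exp (- G x / \<epsilon>)"
    and "\<tau> \<equiv> tail_factor DIM('a) K"
  shows "exp (- \<omega> (K * \<epsilon>) / \<epsilon>) * ((1 - \<tau>) * g) \<le> f"
    and "f \<le> (exp (\<omega> (K * \<epsilon>) / \<epsilon>) + \<tau>) * g"
proof -
  define P where "P x = (if G x < \<delta> then exp (- G x / \<epsilon>) * exp (\<sigma> * \<omega> (G x) / \<epsilon>) else 0)" for x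
  define T where "T x = (if K * \<epsilon> \<le> G x then exp (- (7/8) * G x / \<epsilon>) else 0)" for x
  interpret weight_perturbation \<omega> \<delta> \<epsilon> \<sigma>
    using \<omega>_mono \<omega>_nonneg \<omega>_le \<epsilon> \<sigma> by unfold_locales
  have [measurable]: "(\<lambda>x. \<omega> (G x)) \<in> borel_measurable borel"
    using \<omega>_cont by (rule borel_measurable_continuous_on_comp)
  have f_eq: "f = (\<integral>x. P x \<partial>lborel)"
    unfolding f_def P_def set_lebesgue_integral_def by (intro Bochner_Integration.integral_cong) auto
  have int_E: "integrable lborel (\<lambda>x. exp (- G x / \<epsilon>))"
    using \<epsilon> by (rule integrable_exp_divide)
  have int_T: "integrable lborel T"
    unfolding T_def using \<epsilon> by (rule integrable_tail)
  have int_P: "integrable lborel P"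
    unfolding P_def using \<epsilon> perturbed_weight_le_exp[OF nonneg less_imp_le]
    by (intro integrable_bounded_by_exp[of _ "7 / (8 * \<epsilon>)" 1]) auto
  have tail: "(\<integral>x. T x \<partial>lborel) \<le> \<tau> * g"
    using integral_tail_le[OF \<epsilon>, of K] unfolding T_def \<tau>_def g_def .
  have "exp (- \<omega> (K * \<epsilon>) / \<epsilon>) * ((1 - \<tau>) * g) \<le> exp (- \<omega> (K * \<epsilon>) / \<epsilon>) * (g - (\<integral>x. T x \<partial>lborel))"
    using tail by (simp add: algebra_simps)
  also have "\<dots> = (\<integral>x. exp (- \<omega> (K * \<epsilon>) / \<epsilon>) * (exp (- G x / \<epsilon>) - T x) \<partial>lborel)"
    unfolding g_def using int_E int_T by simp
  also have "\<dots> \<le> f"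
  proof -
    have "exp (- \<omega> (K * \<epsilon>) / \<epsilon>) * (exp (- G x / \<epsilon>) - T x) \<le> P x" for x
      using perturbed_weight_lower[OF nonneg K(2)] by (simp add: T_def P_def)
    then show ?thesis
      unfolding f_eq using int_E int_T int_P by (intro integral_mono) auto
  qed
  finally show "exp (- \<omega> (K * \<epsilon>) / \<epsilon>) * ((1 - \<tau>) * g) \<le> f" .
  have "P x \<le> exp (\<omega> (K * \<epsilon>) / \<epsilon>) * exp (- G x / \<epsilon>) + T x" for x
    using perturbed_weight_upper[OF nonneg mult_nonneg_nonneg[OF K(1) less_imp_le[OF \<epsilon>]]]
    by (simp add: T_def P_def)
  then have "f \<le> (\<integral>x. exp (\<omega> (K * \<epsilon>) / \<epsilon>) * exp (- G x / \<epsilon>) + T x \<partial>lborel)"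
    unfolding f_eq using int_E int_T int_P by (intro integral_mono) auto
  also have "\<dots> = exp (\<omega> (K * \<epsilon>) / \<epsilon>) * g + (\<integral>x. T x \<partial>lborel)"
    unfolding g_def using int_E int_T by simp
  also have "\<dots> \<le> (exp (\<omega> (K * \<epsilon>) / \<epsilon>) + \<tau>) * g"
    using tail by (simp add: algebra_simps)
  finally show "f \<le> (exp (\<omega> (K * \<epsilon>) / \<epsilon>) + \<tau>) * g" .
qed

lemma eventually_two_sided_bound:
  fixes \<omega> \<eta> :: "real \<Rightarrow> real" and \<delta> \<sigma> :: real
  assumes \<omega>_cont: "continuous_on {0..} \<omega>" and \<omega>_mono: "mono_on {0..} \<omega>"
    and \<omega>_nonneg: "\<And>s. 0 \<le> s \<Longrightarrow> 0 \<le> \<omega> s" and \<omega>_le: "\<And>s. 0 \<le> s \<Longrightarrow> s \<le> \<delta> \<Longrightarrow> \<omega> s \<le> s / 8"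
    and \<sigma>: "\<sigma> \<in> {-1, 1}"
    and level: "\<forall>\<^sub>F \<epsilon> in at_right 0. \<exists>K\<ge>0. K * \<epsilon> \<le> \<delta> \<and> tail_factor DIM('a) K < 1 \<and>
                  level_error \<omega> DIM('a) \<epsilon> K \<le> \<eta> \<epsilon>"
  shows "\<forall>\<^sub>F \<epsilon> in at_right 0.
          (let f = (LINT x:{x. G x < \<delta>}|lborel. exp (- G x / \<epsilon>) * exp (\<sigma> * \<omega> (G x) / \<epsilon>));
               g = (LINT x|lborel. exp (- G x / \<epsilon>))
           in (1 - \<eta> \<epsilon>) * f \<le> g \<and> g \<le> (1 + \<eta> \<epsilon>) * f)"
  using level eventually_at_right_less
proof eventually_elim
  case (elim \<epsilon>)
  then obtain K where K: "0 \<le> K" "K * \<epsilon> \<le> \<delta>" "tail_factor DIM('a) K < 1"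
    and error: "level_error \<omega> DIM('a) \<epsilon> K \<le> \<eta> \<epsilon>"
    by blast
  note bounds = perturbed_integral_bounds[OF \<omega>_cont \<omega>_mono \<omega>_nonneg \<omega>_le \<open>0 < \<epsilon>\<close> K(1,2) \<sigma>]
  have "0 \<le> (LINT x|lborel. exp (- G x / \<epsilon>))"
    by (intro integral_nonneg_AE) auto
  then show ?case
    unfolding Let_def using bounds K error \<omega>_nonneg[of "K * \<epsilon>"] \<open>0 < \<epsilon>\<close>
    by (intro two_sided_bound_of_sandwich) (auto simp: level_error_def tail_factor_nonneg)
qed

end

definition continuous_majorant :: "(real \<Rightarrow> real) \<Rightarrow> real \<Rightarrow> real" where
  "continuous_majorant m s = (SUP t\<in>{0<..}. m t * min 1 (max 0 s / t))"

context
  fixes m :: "real \<Rightarrow> real"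
  assumes m_bounds: "\<And>t. 0 \<le> m t \<and> m t \<le> 1"
begin

lemma continuous_majorant_upper:
  assumes "0 < t"
  shows "m t * min 1 (max 0 s / t) \<le> continuous_majorant m s"
  unfolding continuous_majorant_def
proof (rule cSUP_upper)
  show "bdd_above ((\<lambda>t. m t * min 1 (max 0 s / t)) ` {0<..})"
    using m_bounds by (intro bdd_aboveI[of _ 1]) (auto intro!: mult_le_one)
qed (use assms in auto)

lemma continuous_majorant_least:
  assumes "\<And>t. 0 < t \<Longrightarrow> m t * min 1 (max 0 s / t) \<le> B"
  shows "continuous_majorant m s \<le> B"
  unfolding continuous_majorant_def
  using assms by (intro cSUP_least) (auto intro: exI[of _ 1])

lemma continuous_majorant_nonneg: "0 \<le> continuous_majorant m s"
proof -
  have "0 \<le> m 1 * min 1 (max 0 s / 1)"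
    using m_bounds[of 1] by (intro mult_nonneg_nonneg) auto
  then show ?thesis using continuous_majorant_upper[of 1 s] by linarith
qed

lemma continuous_majorant_ge: "0 < s \<Longrightarrow> m s \<le> continuous_majorant m s"
  using continuous_majorant_upper[of s s] by simp

lemma continuous_majorant_zero: "continuous_majorant m 0 = 0"
  using continuous_majorant_least[of 0 0] continuous_majorant_nonneg[of 0] by simp

lemma continuous_majorant_mono:
  assumes "s \<le> s'"
  shows "continuous_majorant m s \<le> continuous_majorant m s'"
proof (rule continuous_majorant_least)
  fix t :: real assume t: "0 < t"
  have "min 1 (max 0 s / t) \<le> min 1 (max 0 s' / t)"
    using t assms by (intro min.mono divide_right_mono) auto
  then have "m t * min 1 (max 0 s / t) \<le> m t * min 1 (max 0 s' / t)"
    using m_bounds by (intro mult_left_mono) auto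
  then show "m t * min 1 (max 0 s / t) \<le> continuous_majorant m s'"
    using continuous_majorant_upper[OF t, of s'] by linarith
qed

text \<open>A modulus of continuity: values of \<open>t\<close> below \<open>a\<close> contribute at most \<open>e\<close>, and the
  larger ones are \<open>1/a\<close>-Lipschitz in \<open>s\<close>.\<close>
lemma continuous_majorant_increment:
  assumes s: "0 \<le> s" "s \<le> s'" and a: "0 < a" and small: "\<And>t. 0 < t \<Longrightarrow> t \<le> a \<Longrightarrow> m t \<le> e"
  shows "continuous_majorant m s' \<le> continuous_majorant m s + max e ((s' - s) / a)"
proof (rule continuous_majorant_least)
  fix t :: real assume t: "0 < t"
  have "min 1 (s' / t) \<le> min 1 (s / t) + min 1 ((s' - s) / t)"
    using t s by (auto simp: min_def field_simps)
  then have "m t * min 1 (max 0 s' / t) \<le> m t * min 1 (max 0 s / t) + m t * min 1 ((s' - s) / t)"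
    using s m_bounds[of t] by (auto simp: max_def simp flip: distrib_left intro!: mult_left_mono)
  also have "m t * min 1 ((s' - s) / t) \<le> max e ((s' - s) / a)"
  proof (cases "t \<le> a")
    case True
    have "m t * min 1 ((s' - s) / t) \<le> m t" using m_bounds[of t] by (simp add: mult_left_le)
    then show ?thesis using small[OF t True] by linarith
  next
    case False
    have "m t * min 1 ((s' - s) / t) \<le> 1 * ((s' - s) / t)"
      using m_bounds[of t] t s by (intro mult_mono) auto
    also have "\<dots> \<le> (s' - s) / a" using False a s by (auto intro!: divide_left_mono)
    finally show ?thesis by linarith
  qed
  finally show "m t * min 1 (max 0 s' / t) \<le> continuous_majorant m s + max e ((s' - s) / a)"
    using continuous_majorant_upper[OF t, of s] by linarith
qed

lemma continuous_on_continuous_majorant: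
  assumes lim: "(m \<longlongrightarrow> 0) (at_right 0)"
  shows "continuous_on {0..} (continuous_majorant m)"
  unfolding continuous_on_iff
proof (intro ballI allI impI)
  fix s e :: real assume s: "s \<in> {0..}" and e: "0 < e"
  have "\<forall>\<^sub>F t in at_right 0. m t < e / 2"
    using lim e by (auto simp: tendsto_iff dist_real_def dest!: spec[of _ "e / 2"]
        elim: eventually_mono)
  then obtain b where b: "0 < b" "\<And>t. 0 < t \<Longrightarrow> t < b \<Longrightarrow> m t < e / 2"
    unfolding eventually_at_right_field by auto
  define a where "a = b / 2"
  have a: "0 < a" "\<And>t. 0 < t \<Longrightarrow> t \<le> a \<Longrightarrow> m t \<le> e / 2"
    using b by (auto simp: a_def less_imp_le)
  show "\<exists>d>0. \<forall>s'\<in>{0..}. dist s' s < d \<longrightarrow> dist (continuous_majorant m s') (continuous_majorant m s) < e"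
  proof (intro exI[of _ "a * e / 2"] conjI ballI impI)
    show "0 < a * e / 2" using a e by simp
    fix s' :: real assume s': "s' \<in> {0..}" and d: "dist s' s < a * e / 2"
    have "max (e / 2) (\<bar>s' - s\<bar> / a) < e"
      using d a e by (auto simp: dist_real_def field_simps)
    moreover have "\<bar>continuous_majorant m s' - continuous_majorant m s\<bar> \<le> max (e / 2) (\<bar>s' - s\<bar> / a)"
    proof (cases "s \<le> s'")
      case True
      then show ?thesis
        using continuous_majorant_increment[of s s' a "e / 2"] continuous_majorant_mono[OF True] a s by auto
    next
      case False
      then show ?thesis
        using continuous_majorant_increment[of s' s a "e / 2"] continuous_majorant_mono[of s' s] a s' by auto
    qed
    ultimately show "dist (continuous_majorant m s') (continuous_majorant m s) < e"
      unfolding dist_real_def by linarith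
  qed
qed

lemma admissible_eta_continuous_majorant:
  assumes "(m \<longlongrightarrow> 0) (at_right 0)"
  shows "admissible_eta (continuous_majorant m)"
proof -
  have cont: "continuous_on {0..} (continuous_majorant m)"
    using assms by (rule continuous_on_continuous_majorant)
  then have "(continuous_majorant m \<longlongrightarrow> continuous_majorant m 0) (at 0 within {0..})"
    by (simp add: continuous_on_def)
  then have "(continuous_majorant m \<longlongrightarrow> 0) (at_right 0)"
    using continuous_majorant_zero by (auto intro: tendsto_within_subset)
  then show ?thesis
    unfolding admissible_eta_def
    using cont continuous_majorant_nonneg continuous_majorant_mono by (auto intro: mono_onI)
qed

end

lemma admissible_eta_eventually_ge:
  fixes \<Phi> :: "real \<Rightarrow> real"
  assumes "(\<Phi> \<longlongrightarrow> 0) (at_right 0)"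
  obtains \<eta> where "admissible_eta \<eta>" and "\<forall>\<^sub>F s in at_right 0. \<Phi> s \<le> \<eta> s"
proof
  define m where "m t = min 1 \<bar>\<Phi> t\<bar>" for t
  have m_bounds: "0 \<le> m t \<and> m t \<le> 1" for t by (simp add: m_def)
  have "(m \<longlongrightarrow> min 1 \<bar>0\<bar>) (at_right 0)"
    unfolding m_def by (intro tendsto_intros assms)
  then show "admissible_eta (continuous_majorant m)"
    using admissible_eta_continuous_majorant[where m=m, OF m_bounds] by simp
  have "\<forall>\<^sub>F s in at_right 0. \<bar>\<Phi> s\<bar> < 1 \<and> 0 < s"
    using assms by (auto simp: tendsto_iff dist_real_def eventually_at_right_less
        dest!: spec[of _ 1] intro: eventually_conj)
  then show "\<forall>\<^sub>F s in at_right 0. \<Phi> s \<le> continuous_majorant m s"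
  proof eventually_elim
    case (elim s)
    then have "\<Phi> s \<le> m s" by (auto simp: m_def)
    then show ?case using continuous_majorant_ge[where m=m, OF m_bounds, of s] elim by linarith
  qed
qed

lemma tendsto_Min_diagonal:
  fixes \<phi> :: "real \<Rightarrow> nat \<Rightarrow> real" and M :: "real \<Rightarrow> nat"
  assumes M: "filterlim M sequentially (at_right 0)"
    and nonneg: "\<And>\<epsilon> K. 0 < \<epsilon> \<Longrightarrow> K0 \<le> K \<Longrightarrow> 0 \<le> \<phi> \<epsilon> K"
    and small: "\<And>e. 0 < e \<Longrightarrow> \<exists>K\<ge>K0. \<forall>\<^sub>F \<epsilon> in at_right 0. \<phi> \<epsilon> K < e"
  shows "((\<lambda>\<epsilon>. Min (\<phi> \<epsilon> ` {K0..M \<epsilon>})) \<longlongrightarrow> 0) (at_right 0)"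
proof -
  have M_ge: "\<forall>\<^sub>F \<epsilon> in at_right 0. K \<le> M \<epsilon>" for K
    using M by (simp add: filterlim_at_top)
  show ?thesis
  proof (rule order_tendstoI)
    fix e :: real
    assume "e < 0"
    from M_ge[of K0] eventually_at_right_less
    show "\<forall>\<^sub>F \<epsilon> in at_right 0. e < Min (\<phi> \<epsilon> ` {K0..M \<epsilon>})"
    proof eventually_elim
      case (elim \<epsilon>)
      then have "Min (\<phi> \<epsilon> ` {K0..M \<epsilon>}) \<in> \<phi> \<epsilon> ` {K0..M \<epsilon>}"
        by (intro Min_in) auto
      then show ?case using nonneg[of \<epsilon>] elim \<open>e < 0\<close> by fastforce
    qed
  next
    fix e :: real
    assume "0 < e"
    then obtain K where K: "K0 \<le> K" "\<forall>\<^sub>F \<epsilon> in at_right 0. \<phi> \<epsilon> K < e"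
      using small by blast
    from K(2) M_ge[of K]
    show "\<forall>\<^sub>F \<epsilon> in at_right 0. Min (\<phi> \<epsilon> ` {K0..M \<epsilon>}) < e"
    proof eventually_elim
      case (elim \<epsilon>)
      then have "Min (\<phi> \<epsilon> ` {K0..M \<epsilon>}) \<le> \<phi> \<epsilon> K"
        using K(1) by (intro Min_le) auto
      then show ?case using elim by linarith
    qed
  qed
qed

lemma tendsto_comp_scaled_ratio:
  fixes \<omega> :: "real \<Rightarrow> real"
  assumes \<omega>: "((\<lambda>s. \<omega> s / s) \<longlongrightarrow> 0) (at_right 0)" and c: "0 < c"
  shows "((\<lambda>\<epsilon>. \<omega> (c * \<epsilon>) / \<epsilon>) \<longlongrightarrow> 0) (at_right 0)"
proof -
  have "filterlim (\<lambda>\<epsilon>. c * \<epsilon>) (at_right 0) (at_right 0)"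
    using c by (auto simp: filterlim_at eventually_at_right_less
        intro!: eventually_mono[OF eventually_at_right_less] tendsto_mult_right_zero tendsto_ident_at)
  from filterlim_compose[OF \<omega> this]
  have "((\<lambda>\<epsilon>. c * (\<omega> (c * \<epsilon>) / (c * \<epsilon>))) \<longlongrightarrow> c * 0) (at_right 0)"
    by (intro tendsto_mult_left) (simp add: o_def)
  then show ?thesis
    using c by simp
qed

lemma level_error_nonneg:
  assumes "\<And>s. 0 \<le> s \<Longrightarrow> 0 \<le> \<omega> s" and "0 < \<epsilon>" "0 \<le> K" "tail_factor n K < 1"
  shows "0 \<le> level_error \<omega> n \<epsilon> K"
proof -
  have "1 \<le> exp (\<omega> (K * \<epsilon>) / \<epsilon>)"
    using assms by simp
  then have "1 - tail_factor n K \<le> exp (\<omega> (K * \<epsilon>) / \<epsilon>)"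
    using tail_factor_nonneg[of n K] by linarith
  then show ?thesis
    unfolding level_error_def using assms(4) by (simp add: le_divide_eq)
qed

lemma level_error_eventually_less:
  assumes \<omega>_small: "((\<lambda>s. \<omega> s / s) \<longlongrightarrow> 0) (at_right 0)" and e: "0 < e"
  shows "\<exists>K\<ge>K0. \<forall>\<^sub>F \<epsilon> in at_right 0. level_error \<omega> n \<epsilon> (real K) < e"
proof -
  have "(\<lambda>K. tail_factor n (real K)) \<longlonglongrightarrow> 0"
    by (rule filterlim_compose[OF tendsto_tail_factor filterlim_real_sequentially])
  then have "(\<lambda>K. 1 / (1 - tail_factor n (real K)) - 1) \<longlonglongrightarrow> 1 / (1 - 0) - 1"
    by (intro tendsto_intros) auto
  then have "\<forall>\<^sub>F K in sequentially. 1 / (1 - tail_factor n (real K)) - 1 < e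
      \<and> tail_factor n (real K) < 1 \<and> Suc K0 \<le> K"
    using e \<open>(\<lambda>K. tail_factor n (real K)) \<longlonglongrightarrow> 0\<close>
    by (intro eventually_conj order_tendstoD(2) eventually_ge_at_top) auto
  then obtain K where K: "1 / (1 - tail_factor n (real K)) - 1 < e" "tail_factor n (real K) < 1" "Suc K0 \<le> K"
    using eventually_sequentially by auto
  have "((\<lambda>\<epsilon>. level_error \<omega> n \<epsilon> (real K)) \<longlongrightarrow> exp 0 / (1 - tail_factor n (real K)) - 1) (at_right 0)"
    unfolding level_error_def using K(2,3)
    by (intro tendsto_intros tendsto_comp_scaled_ratio[OF \<omega>_small]) auto
  then have "\<forall>\<^sub>F \<epsilon> in at_right 0. level_error \<omega> n \<epsilon> (real K) < e"
    using K(1) by (intro order_tendstoD(2)) auto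
  then show ?thesis using K(3) by (intro exI[of _ K]) auto
qed

lemma filterlim_nat_floor_inverse_sqrt:
  "filterlim (\<lambda>\<epsilon>::real. nat \<lfloor>1 / sqrt \<epsilon>\<rfloor>) sequentially (at_right 0)"
proof -
  have "filterlim (\<lambda>\<epsilon>::real. 1 / sqrt \<epsilon>) at_top (at_right 0)"
    by real_asymp
  then show ?thesis
    by (intro filterlim_compose[OF filterlim_nat_sequentially]
        filterlim_compose[OF filterlim_floor_sequentially])
qed

lemma nat_floor_inverse_sqrt_mult_le:
  assumes "0 < \<epsilon>" "K \<le> nat \<lfloor>1 / sqrt \<epsilon>\<rfloor>"
  shows "real K * \<epsilon> \<le> sqrt \<epsilon>"
proof -
  have "real K \<le> real (nat \<lfloor>1 / sqrt \<epsilon>\<rfloor>)"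
    using assms(2) by simp
  also have "\<dots> \<le> 1 / sqrt \<epsilon>"
    using assms(1) by (intro of_nat_floor) simp
  finally have "real K * \<epsilon> \<le> 1 / sqrt \<epsilon> * \<epsilon>"
    by (rule mult_right_mono) (use assms(1) in auto)
  also have "\<dots> = sqrt \<epsilon>"
    using assms(1) by (simp add: real_div_sqrt)
  finally show ?thesis .
qed

text \<open>For each fixed \<open>K\<close> the level error tends to \<open>1 / (1 - tail_factor n K) - 1\<close>, which is
  small for large \<open>K\<close>; minimising over \<open>K \<le> 1 / sqrt \<epsilon>\<close> lets the level grow slowly enough
  that \<open>K * \<epsilon> \<le> sqrt \<epsilon> \<rightarrow> 0\<close> while the error still vanishes.\<close>
lemma tendsto_Min_level_error:
  assumes \<omega>_nonneg: "\<And>s. 0 \<le> s \<Longrightarrow> 0 \<le> \<omega> s" and \<omega>_small: "((\<lambda>s. \<omega> s / s) \<longlongrightarrow> 0) (at_right 0)"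
    and K0: "\<And>K. K0 \<le> K \<Longrightarrow> tail_factor n (real K) < 1"
  shows "((\<lambda>\<epsilon>. Min ((\<lambda>K. level_error \<omega> n \<epsilon> (real K)) ` {K0..nat \<lfloor>1 / sqrt \<epsilon>\<rfloor>})) \<longlongrightarrow> 0) (at_right 0)"
  using filterlim_nat_floor_inverse_sqrt
proof (rule tendsto_Min_diagonal)
  show "0 \<le> level_error \<omega> n \<epsilon> (real K)" if "0 < \<epsilon>" "K0 \<le> K" for \<epsilon> K
    using level_error_nonneg[OF \<omega>_nonneg] that K0 by simp
qed (use level_error_eventually_less[OF \<omega>_small] in blast)

lemma splitting_level_choice:
  fixes \<omega> :: "real \<Rightarrow> real" and n :: nat
  assumes \<omega>_nonneg: "\<And>s. 0 \<le> s \<Longrightarrow> 0 \<le> \<omega> s" and \<omega>_small: "((\<lambda>s. \<omega> s / s) \<longlongrightarrow> 0) (at_right 0)"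
  obtains \<eta> where "admissible_eta \<eta>"
    and "\<And>\<delta>. 0 < \<delta> \<Longrightarrow> \<forall>\<^sub>F \<epsilon> in at_right 0. \<exists>K\<ge>0. K * \<epsilon> \<le> \<delta> \<and> tail_factor n K < 1 \<and>
           level_error \<omega> n \<epsilon> K \<le> \<eta> \<epsilon>"
proof -
  obtain K0 where K0: "\<And>K. K0 \<le> K \<Longrightarrow> tail_factor n (real K) < 1"
    using eventually_tail_factor_less_one by blast
  define M where "M \<epsilon> = nat \<lfloor>1 / sqrt \<epsilon>\<rfloor>" for \<epsilon> :: real
  define \<Phi> where "\<Phi> \<epsilon> = Min ((\<lambda>K. level_error \<omega> n \<epsilon> (real K)) ` {K0..M \<epsilon>})" for \<epsilon>
  obtain \<eta> where \<eta>: "admissible_eta \<eta>" and \<Phi>_le_\<eta>: "\<forall>\<^sub>F s in at_right 0. \<Phi> s \<le> \<eta> s"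
    using tendsto_Min_level_error[OF \<omega>_nonneg \<omega>_small K0] unfolding \<Phi>_def M_def
    by (rule admissible_eta_eventually_ge)
  have "\<forall>\<^sub>F \<epsilon> in at_right 0. \<exists>K\<ge>0. K * \<epsilon> \<le> \<delta> \<and> tail_factor n K < 1 \<and> level_error \<omega> n \<epsilon> K \<le> \<eta> \<epsilon>"
    if \<delta>: "0 < \<delta>" for \<delta>
  proof -
    have "\<forall>\<^sub>F \<epsilon> in at_right 0. 0 < \<epsilon> \<and> \<epsilon> < \<delta>\<^sup>2 \<and> K0 \<le> M \<epsilon>"
      using \<delta> filterlim_nat_floor_inverse_sqrt unfolding M_def
      by (intro eventually_conj eventually_at_right_less order_tendstoD(2)[OF tendsto_ident_at])
        (auto simp: filterlim_at_top)
    with \<Phi>_le_\<eta> show ?thesis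
    proof eventually_elim
      case (elim \<epsilon>)
      then have "\<Phi> \<epsilon> \<in> (\<lambda>K. level_error \<omega> n \<epsilon> (real K)) ` {K0..M \<epsilon>}"
        unfolding \<Phi>_def by (intro Min_in) auto
      then obtain K where K: "K0 \<le> K" "K \<le> M \<epsilon>" and \<Phi>_eq: "\<Phi> \<epsilon> = level_error \<omega> n \<epsilon> (real K)"
        by auto
      have "real K * \<epsilon> \<le> sqrt \<epsilon>"
        using elim K(2) unfolding M_def by (intro nat_floor_inverse_sqrt_mult_le) auto
      also have "\<dots> < \<delta>"
        using elim \<delta> by (simp add: real_less_lsqrt)
      finally show ?case
        using K0[OF K(1)] \<Phi>_eq elim by (intro exI[of _ "real K"]) auto
    qed
  qed
  with \<eta> show ?thesis using that by blast
qed

theorem lemma3p9: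
  fixes \<omega> :: "real \<Rightarrow> real" and \<delta>0 :: real
  assumes \<omega>_cont: "continuous_on {0..} \<omega>"
    and \<omega>_mono: "mono_on {0..} \<omega>"
    and \<omega>_nonneg: "\<forall>s\<ge>0. 0 \<le> \<omega> s"
    and \<omega>_small: "((\<lambda>s. \<omega> s / s) \<longlongrightarrow> 0) (at_right 0)"
    and \<delta>0_ok: "\<forall>s. 0 \<le> s \<and> s \<le> 4 * \<delta>0 \<longrightarrow> \<omega> s \<le> s / 8"
    and \<delta>0_largest: "\<forall>d. (\<forall>s. 0 \<le> s \<and> s \<le> 4 * d \<longrightarrow> \<omega> s \<le> s / 8) \<longrightarrow> d \<le> \<delta>0"
  shows "\<exists>(C::real) \<eta>. C > 0 \<and> admissible_eta \<eta> \<and>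
    (\<forall>(G::'a::euclidean_space \<Rightarrow> real) \<delta> (\<sigma>::real).
       convex_on UNIV G \<and> proper_minimum G 0 \<and> G 0 = 0 \<and>
       0 < \<delta> \<and> \<delta> \<le> \<delta>0 \<and> \<sigma> \<in> {-1, 1} \<longrightarrow>
       (\<forall>\<^sub>F \<epsilon> in at_right 0.
          (let f = (LINT x:{x. G x < \<delta>}|lborel. exp (- G x / \<epsilon>) * exp (\<sigma> * \<omega> (G x) / \<epsilon>));
               g = (LINT x|lborel. exp (- G x / \<epsilon>))
           in (1 - \<eta> (C * \<epsilon>)) * f \<le> g \<and> g \<le> (1 + \<eta> (C * \<epsilon>)) * f)))"
proof -
  have \<omega>_nonneg': "\<And>s. 0 \<le> s \<Longrightarrow> 0 \<le> \<omega> s"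
    using \<omega>_nonneg by blast
  obtain \<eta> where \<eta>: "admissible_eta \<eta>"
    and level: "\<And>\<delta>. 0 < \<delta> \<Longrightarrow> \<forall>\<^sub>F \<epsilon> in at_right 0. \<exists>K\<ge>0. K * \<epsilon> \<le> \<delta> \<and>
                  tail_factor DIM('a) K < 1 \<and> level_error \<omega> DIM('a) \<epsilon> K \<le> \<eta> \<epsilon>"
    using splitting_level_choice[OF \<omega>_nonneg' \<omega>_small] by blast
  have \<omega>_le: "\<omega> s \<le> s / 8" if "\<delta> \<le> \<delta>0" "0 \<le> s" "s \<le> \<delta>" for \<delta> s
    using \<delta>0_ok that by auto
  show ?thesis
    using \<eta> level \<omega>_le
    by (intro exI[of _ 1] exI[of _ \<eta>] conjI allI impI
        convex_proper_minimum.eventually_two_sided_bound[OF _ \<omega>_cont \<omega>_mono \<omega>_nonneg'])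
      (auto intro: convex_proper_minimum.intro)
qed

end
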